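(* Let $\mathcal{M}\subset\mathbb{R}^n$ be a locally symmetric $C^2$ submanifold with characteristic permutation $\sigma_*$, let $\sigma\in\Sigma^n$ with $\mathcal{M}\cap\Delta(\sigma)\neq\emptyset$, and let $\tau\in\Sigma^n$ with $P(\tau)$ refining $P(\sigma)$. Then every cycle of $\tau$ (and of $\sigma$) is contained either in $F:=\mathbb{N}_n\setminus\mathrm{supp}(\sigma_* )$ or in $\mathrm{supp}(\sigma_* )$, and, writing $\rho^F,\rho^M$ for the restrictions of $\rho\in\{\tau,\sigma,\sigma_*\}$ to $F$ and to $\mathrm{supp}(\sigma_* )$, one has: $P(\tau^F)$ refines $P(\sigma^F)$; $P(\sigma^M)=P(\sigma_*^M)$; and $P(\tau^M)$ refines $P(\sigma^M)$.
   Context: $\Sigma^n$ permutations of $\mathbb{N}_n$ acting by $(\sigma x)_i=x_{\sigma^{-1}(i)}$; $\mathrm{supp}(\sigma)$ non-fixed indices; $P(\sigma)$ partition into orbits of $\sigma$; $P(x)$ partition by equal coordinates; $\Delta(\sigma)=\{x:P(x)=P(\sigma)\}$; $P'$ refines $P$ if every set of $P$ is a union of sets of $P'$. $\mathbb{R}^n_\ge=\{x:x_1\ge\cdots\ge x_n\}$; $B$ open ball. A set $S$ is locally symmetric if $S\cap\mathbb{R}^n_\ge\ne\emptyset$ and each $x\in S$ has $\delta>0$ with $\sigma(S\cap B(x,\delta))=S\cap B(x,\delta)$ for all $y\in S\cap B(x,\delta)$, all $\sigma$ with $\sigma y=y$; a locally symmetric $C^2$ submanifold is a connected $C^2$ submanifold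 without boundary which is locally symmetric. A characteristic permutation is a $\sigma_*$ with $\mathcal{M}\cap B(y,\rho)\subset\Delta(\sigma_* )$ for some $y\in\mathcal{M}$, $\rho>0$. *)

theory Defs
  imports "HOL-Analysis.Analysis"
begin

definition pact :: "('n::finite \<Rightarrow> 'n) \<Rightarrow> real^'n \<Rightarrow> real^'n" where
  "pact \<sigma> x = (\<chi> i. x $ (inv \<sigma> i))"

definition supp :: "('n \<Rightarrow> 'n) \<Rightarrow> 'n set" where
  "supp \<sigma> = {i. \<sigma> i \<noteq> i}"

definition cyc :: "('n \<Rightarrow> 'n) \<Rightarrow> 'n \<Rightarrow> 'n set" where
  "cyc \<rho> i = {(\<rho> ^^ k) i | k. True}"

definition orbit_partition_on :: "'n set \<Rightarrow> ('n \<Rightarrow> 'n) \<Rightarrow> 'n set set" where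
  "orbit_partition_on A \<rho> = {cyc \<rho> i | i. i \<in> A}"

definition Pperm :: "('n \<Rightarrow> 'n) \<Rightarrow> 'n set set" where
  "Pperm \<sigma> = orbit_partition_on UNIV \<sigma>"

definition Pvec :: "real^'n \<Rightarrow> 'n set set" where
  "Pvec x = {{j. x $ j = x $ i} | i. True}"

definition Delta :: "('n \<Rightarrow> 'n) \<Rightarrow> (real^'n) set" where
  "Delta \<sigma> = {x. Pvec x = Pperm \<sigma>}"

definition refines :: "'n set set \<Rightarrow> 'n set set \<Rightarrow> bool" where
  "refines P' P \<longleftrightarrow> (\<forall>A\<in>P. \<exists>Q\<subseteq>P'. A = \<Union>Q)"

definition perm_restrict :: "('n \<Rightarrow> 'n) \<Rightarrow> 'n set \<Rightarrow> 'n \<Rightarrow> 'n" where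
  "perm_restrict \<rho> A = (\<lambda>i. if i \<in> A then \<rho> i else i)"

definition sorted_cone :: "(real^'n::{finite,linorder}) set" where
  "sorted_cone = {x. \<forall>i j. i \<le> j \<longrightarrow> x $ j \<le> x $ i}"

definition locally_symmetric :: "(real^'n::{finite,linorder}) set \<Rightarrow> bool" where
  "locally_symmetric S \<longleftrightarrow> S \<inter> sorted_cone \<noteq> {} \<and>
     (\<forall>x\<in>S. \<exists>\<delta>>0. \<forall>y\<in>S \<inter> ball x \<delta>. \<forall>\<sigma>. \<sigma> permutes UNIV \<and> pact \<sigma> y = y \<longrightarrow>
        pact \<sigma> ` (S \<inter> ball x \<delta>) = S \<inter> ball x \<delta>)"

definition C2_on :: "('a::euclidean_space \<Rightarrow> 'b::euclidean_space) \<Rightarrow> 'a set \<Rightarrow> bool" where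
  "C2_on f U \<longleftrightarrow> (\<exists>f' f''. (\<forall>x\<in>U. (f has_derivative blinfun_apply (f' x)) (at x) \<and>
       (f' has_derivative blinfun_apply (f'' x)) (at x)) \<and> continuous_on U f'')"

text \<open>C^2 embedded submanifold without boundary: locally straightened by a C^2 diffeomorphism
  onto a linear subspace\<close>
definition C2_submanifold :: "('a::euclidean_space) set \<Rightarrow> bool" where
  "C2_submanifold M \<longleftrightarrow> (\<forall>x\<in>M. \<exists>U (\<phi>::'a \<Rightarrow> 'a) L. open U \<and> x \<in> U \<and> C2_on \<phi> U \<and> inj_on \<phi> U \<and>
      open (\<phi> ` U) \<and> C2_on (inv_into U \<phi>) (\<phi> ` U) \<and> subspace L \<and> \<phi> ` (M \<inter> U) = L \<inter> \<phi> ` U)"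

definition locally_symmetric_C2_submanifold :: "(real^'n::{finite,linorder}) set \<Rightarrow> bool" where
  "locally_symmetric_C2_submanifold M \<longleftrightarrow> connected M \<and> C2_submanifold M \<and> locally_symmetric M"

definition characteristic_perm :: "(real^'n::{finite,linorder}) set \<Rightarrow> ('n \<Rightarrow> 'n) \<Rightarrow> bool" where
  "characteristic_perm M \<sigma> \<longleftrightarrow> \<sigma> permutes UNIV \<and>
     (\<exists>y\<in>M. \<exists>\<rho>>0. M \<inter> ball y \<rho> \<subseteq> Delta \<sigma>)"

end

theory Submission
  imports Defs
begin

(* For coordinates i, j let E(i,j) be the set of points of M near which M lies in the
   hyperplane x_i = x_j. It is open in M, and it is closed: at a limit point w of E(i,j) we
   have w_i = w_j, so by local symmetry the transposition (i j) maps M near w into M, and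
   linearizing a chart at a nearby point of E(i,j) shows that x - (i j) x, which is orthogonal
   to the hyperplane, has at most half its own length. By connectedness E(i,j) is empty or all
   of M, and the characteristic permutation decides which: E(i,j) = M iff j lies in the
   sigma_*-cycle of i. Moreover, at every point of M a coordinate c moved by sigma_* agrees only
   with coordinates of its sigma_*-cycle; otherwise swapping c with such a k would put the point
   into E(c,k). Hence the sigma-cycles meeting supp sigma_* are the sigma_*-cycles, and all claims
   follow from the fact that tau-cycles lie inside sigma-cycles. *)

lemma cyc_self: "i \<in> cyc \<rho> i"
  unfolding cyc_def by (auto intro!: exI[of _ 0])

lemma cyc_apply: "\<rho> i \<in> cyc \<rho> i"
  unfolding cyc_def by (auto intro!: exI[of _ 1])

lemma cyc_subset:
  assumes "j \<in> cyc \<rho> i" shows "cyc \<rho> j \<subseteq> cyc \<rho> i"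
proof
  fix x assume "x \<in> cyc \<rho> j"
  then obtain k where "x = (\<rho> ^^ k) j" unfolding cyc_def by auto
  moreover obtain m where "j = (\<rho> ^^ m) i" using assms unfolding cyc_def by auto
  ultimately have "x = (\<rho> ^^ (k + m)) i" by (simp add: funpow_add)
  then show "x \<in> cyc \<rho> i" unfolding cyc_def by auto
qed

lemma cyc_fixpoint: "\<rho> j = j \<Longrightarrow> cyc \<rho> j = {j}"
proof -
  assume "\<rho> j = j"
  then have "(\<rho> ^^ k) j = j" for k by (induction k) simp_all
  then show ?thesis unfolding cyc_def by auto
qed

lemma cyc_eq:
  fixes \<rho> :: "'n::finite \<Rightarrow> 'n"
  assumes "\<rho> permutes UNIV" "j \<in> cyc \<rho> i" shows "cyc \<rho> j = cyc \<rho> i"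
proof
  show "cyc \<rho> j \<subseteq> cyc \<rho> i" using assms(2) by (rule cyc_subset)
  obtain m where m: "j = (\<rho> ^^ m) i" using assms(2) unfolding cyc_def by auto
  have "permutation \<rho>" by (rule permutes_imp_permutation[OF _ assms(1)]) simp
  then obtain n where "n > 0" "(\<rho> ^^ n) i = i" by (rule permutation_self)
  then have period: "(\<rho> ^^ (n * k)) i = i" for k
    by (induction k) (simp_all add: funpow_add)
  have "(\<rho> ^^ ((n - 1) * m)) j = (\<rho> ^^ ((n - 1) * m + m)) i"
    by (simp add: m funpow_add)
  also have "(n - 1) * m + m = n * m" using \<open>n > 0\<close> by (cases n) simp_all
  finally have "i \<in> cyc \<rho> j" unfolding cyc_def period by (auto intro!: exI[of _ "(n - 1) * m"])
  then show "cyc \<rho> i \<subseteq> cyc \<rho> j" by (rule cyc_subset)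
qed

lemma cyc_in_Pperm: "cyc \<rho> i \<in> Pperm \<rho>"
  unfolding Pperm_def orbit_partition_on_def by auto

lemma cyc_subset_if_refines:
  fixes \<sigma> \<tau> :: "'n::finite \<Rightarrow> 'n"
  assumes "\<tau> permutes UNIV" "refines (Pperm \<tau>) (Pperm \<sigma>)"
  shows "cyc \<tau> i \<subseteq> cyc \<sigma> i"
proof -
  obtain Q where Q: "Q \<subseteq> Pperm \<tau>" "cyc \<sigma> i = \<Union>Q"
    using assms(2) cyc_in_Pperm[of \<sigma> i] unfolding refines_def by blast
  moreover have "i \<in> cyc \<sigma> i" by (rule cyc_self)
  ultimately obtain Y where Y: "Y \<in> Q" "i \<in> Y" by blast
  then obtain m where "Y = cyc \<tau> m" using Q(1) unfolding Pperm_def orbit_partition_on_def by auto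
  with Y(2) have "cyc \<tau> i = Y" using cyc_eq[OF assms(1)] by simp
  then show ?thesis using Y Q(2) by blast
qed

lemma cyc_perm_restrict:
  assumes "cyc \<rho> i \<subseteq> A" shows "cyc (perm_restrict \<rho> A) i = cyc \<rho> i"
proof -
  have "(\<rho> ^^ k) i \<in> A" for k using assms unfolding cyc_def by auto
  then have "(perm_restrict \<rho> A ^^ k) i = (\<rho> ^^ k) i" for k
    by (induction k) (simp_all add: perm_restrict_def)
  then show ?thesis unfolding cyc_def by simp
qed

lemma orbit_partition_on_perm_restrict:
  assumes "\<And>i. i \<in> A \<Longrightarrow> cyc \<rho> i \<subseteq> A"
  shows "orbit_partition_on A (perm_restrict \<rho> A) = {cyc \<rho> i | i. i \<in> A}"
  using cyc_perm_restrict[OF assms] by (auto simp: orbit_partition_on_def)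

lemma refines_perm_restrict:
  fixes \<sigma> \<tau> :: "'n::finite \<Rightarrow> 'n"
  assumes "\<sigma> permutes UNIV" "\<tau> permutes UNIV"
    and closed: "\<And>i. i \<in> A \<Longrightarrow> cyc \<sigma> i \<subseteq> A"
    and finer: "\<And>i. cyc \<tau> i \<subseteq> cyc \<sigma> i"
  shows "refines (orbit_partition_on A (perm_restrict \<tau> A)) (orbit_partition_on A (perm_restrict \<sigma> A))"
  unfolding refines_def
proof
  have closed_\<tau>: "cyc \<tau> i \<subseteq> A" if "i \<in> A" for i using closed finer that by blast
  fix X assume "X \<in> orbit_partition_on A (perm_restrict \<sigma> A)"
  then obtain i where i: "i \<in> A" "X = cyc \<sigma> i"
    using orbit_partition_on_perm_restrict[OF closed] by auto
  let ?Q = "{cyc \<tau> j | j. j \<in> cyc \<sigma> i}"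
  have "?Q \<subseteq> orbit_partition_on A (perm_restrict \<tau> A)"
    using orbit_partition_on_perm_restrict[OF closed_\<tau>] closed[OF i(1)] by auto
  moreover have "X = \<Union>?Q"
  proof
    show "X \<subseteq> \<Union>?Q" using i cyc_self[of _ \<tau>] by blast
    show "\<Union>?Q \<subseteq> X" using i finer cyc_eq[OF assms(1)] by blast
  qed
  ultimately show "\<exists>Q\<subseteq>orbit_partition_on A (perm_restrict \<tau> A). X = \<Union>Q" by blast
qed

lemma cyc_subset_diff_if_closed:
  fixes \<rho> :: "'n::finite \<Rightarrow> 'n"
  assumes "\<rho> permutes UNIV" "\<And>c. c \<in> A \<Longrightarrow> cyc \<rho> c \<subseteq> A" "i \<notin> A"
  shows "cyc \<rho> i \<subseteq> UNIV - A"
proof (rule ccontr)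
  assume "\<not> cyc \<rho> i \<subseteq> UNIV - A"
  then obtain c where c: "c \<in> cyc \<rho> i" "c \<in> A" by blast
  then have "cyc \<rho> i \<subseteq> A" using cyc_eq[OF assms(1) c(1)] assms(2)[OF c(2)] by simp
  then show False using cyc_self[of i \<rho>] assms(3) by blast
qed

lemma Pperm_subset_diff_or_subset:
  fixes \<sigma> \<rho> :: "'n::finite \<Rightarrow> 'n"
  assumes "\<sigma> permutes UNIV" "\<And>c. c \<in> A \<Longrightarrow> cyc \<sigma> c \<subseteq> A" "\<And>i. cyc \<rho> i \<subseteq> cyc \<sigma> i"
  shows "\<forall>C\<in>Pperm \<rho>. C \<subseteq> UNIV - A \<or> C \<subseteq> A"
proof
  fix C assume "C \<in> Pperm \<rho>"
  then obtain i where "C = cyc \<rho> i" unfolding Pperm_def orbit_partition_on_def by blast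
  then show "C \<subseteq> UNIV - A \<or> C \<subseteq> A"
    using assms(2,3)[of i] cyc_subset_diff_if_closed[OF assms(1,2), of i] by blast
qed

lemma cyc_subset_supp:
  fixes \<rho> :: "'n::finite \<Rightarrow> 'n"
  assumes "\<rho> permutes UNIV" "c \<in> supp \<rho>" shows "cyc \<rho> c \<subseteq> supp \<rho>"
proof
  fix j assume j: "j \<in> cyc \<rho> c"
  show "j \<in> supp \<rho>"
  proof (rule ccontr)
    assume "j \<notin> supp \<rho>"
    then have "cyc \<rho> c = {j}" using cyc_fixpoint[of \<rho> j] cyc_eq[OF assms(1) j] by (simp add: supp_def)
    then show False using assms(2) cyc_self[of c \<rho>] cyc_apply[of \<rho> c] by (simp add: supp_def)
  qed
qed

lemma Delta_eq_iff_cyc: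
  fixes \<sigma> :: "'n::finite \<Rightarrow> 'n"
  assumes "\<sigma> permutes UNIV" "x \<in> Delta \<sigma>"
  shows "x $ j = x $ i \<longleftrightarrow> j \<in> cyc \<sigma> i"
proof
  have "{k. x $ k = x $ i} \<in> Pperm \<sigma>"
    using assms(2) unfolding Delta_def Pvec_def by auto
  then obtain m where m: "{k. x $ k = x $ i} = cyc \<sigma> m"
    unfolding Pperm_def orbit_partition_on_def by auto
  moreover have "i \<in> cyc \<sigma> m" using m by blast
  ultimately have "{k. x $ k = x $ i} = cyc \<sigma> i" using cyc_eq[OF assms(1)] by simp
  then show "x $ j = x $ i \<Longrightarrow> j \<in> cyc \<sigma> i" by blast
next
  have "cyc \<sigma> i \<in> Pvec x" using assms(2) cyc_in_Pperm by (simp add: Delta_def)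
  then obtain m where m: "cyc \<sigma> i = {k. x $ k = x $ m}" unfolding Pvec_def by auto
  then have "x $ i = x $ m" using cyc_self[of i \<sigma>] by blast
  then show "j \<in> cyc \<sigma> i \<Longrightarrow> x $ j = x $ i" using m by simp
qed

lemma C2_on_imp_C1:
  assumes "C2_on f U"
  obtains f' where "\<And>x. x \<in> U \<Longrightarrow> (f has_derivative blinfun_apply (f' x)) (at x)"
    and "\<And>x. x \<in> U \<Longrightarrow> isCont f' x"
  using assms has_derivative_continuous unfolding C2_on_def by metis

lemma C2_submanifold_chart:
  fixes M :: "'a::euclidean_space set"
  assumes "C2_submanifold M" "w \<in> M"
  obtains U L and \<phi> \<psi> :: "'a \<Rightarrow> 'a" and \<phi>' \<psi>'
  where "open U" "w \<in> U" "open (\<phi> ` U)" "subspace L" "\<phi> ` (M \<inter> U) = L \<inter> \<phi> ` U"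
    and "\<And>x. x \<in> U \<Longrightarrow> \<psi> (\<phi> x) = x"
    and "\<And>x. x \<in> U \<Longrightarrow> (\<phi> has_derivative blinfun_apply (\<phi>' x)) (at x)" "\<And>x. x \<in> U \<Longrightarrow> isCont \<phi>' x"
    and "\<And>s. s \<in> \<phi> ` U \<Longrightarrow> (\<psi> has_derivative blinfun_apply (\<psi>' s)) (at s)"
    and "\<And>s. s \<in> \<phi> ` U \<Longrightarrow> isCont \<psi>' s"
proof -
  obtain U L and \<phi> :: "'a \<Rightarrow> 'a" where chart: "open U" "w \<in> U" "C2_on \<phi> U" "inj_on \<phi> U"
    "open (\<phi> ` U)" "C2_on (inv_into U \<phi>) (\<phi> ` U)" "subspace L" "\<phi> ` (M \<inter> U) = L \<inter> \<phi> ` U"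
    using assms unfolding C2_submanifold_def by blast
  obtain \<phi>' where \<phi>': "\<And>x. x \<in> U \<Longrightarrow> (\<phi> has_derivative blinfun_apply (\<phi>' x)) (at x)"
    "\<And>x. x \<in> U \<Longrightarrow> isCont \<phi>' x"
    using C2_on_imp_C1[OF chart(3)] by blast
  obtain \<psi>' where \<psi>': "\<And>s. s \<in> \<phi> ` U \<Longrightarrow> (inv_into U \<phi> has_derivative blinfun_apply (\<psi>' s)) (at s)"
    "\<And>s. s \<in> \<phi> ` U \<Longrightarrow> isCont \<psi>' s"
    using C2_on_imp_C1[OF chart(6)] by blast
  show thesis
    by (rule that[OF chart(1,2,5,7,8) _ \<phi>' \<psi>']) (simp add: chart(4))
qed

lemma C1_uniform_linearization:
  fixes f :: "'a::real_normed_vector \<Rightarrow> 'b::real_normed_vector"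
  assumes "open V" "p \<in> V"
    and deriv: "\<And>y. y \<in> V \<Longrightarrow> (f has_derivative blinfun_apply (f' y)) (at y)"
    and "isCont f' p" "\<epsilon> > 0"
  obtains r where "r > 0" "ball p r \<subseteq> V"
    and "\<And>q s s'. q \<in> ball p r \<Longrightarrow> s \<in> ball p r \<Longrightarrow> s' \<in> ball p r \<Longrightarrow>
      norm (f s - f s' - f' q (s - s')) \<le> \<epsilon> * norm (s - s')"
proof -
  obtain r1 where r1: "r1 > 0" "\<And>y. dist y p < r1 \<Longrightarrow> dist (f' y) (f' p) < \<epsilon> / 2"
    using assms(4)[unfolded continuous_at_eps_delta] \<open>\<epsilon> > 0\<close> by (meson half_gt_zero)
  obtain r2 where r2: "r2 > 0" "ball p r2 \<subseteq> V" using assms(1,2) open_contains_ball by blast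
  define r where "r = min r1 r2"
  have r: "r > 0" "ball p r \<subseteq> V" using r1 r2 by (auto simp: r_def)
  have near: "norm (f' y - f' q) \<le> \<epsilon>" if "y \<in> ball p r" "q \<in> ball p r" for y q
  proof -
    have "norm (f' y - f' q) \<le> dist (f' y) (f' p) + dist (f' q) (f' p)"
      using dist_triangle2[of "f' y" "f' q" "f' p"] by (simp add: dist_norm)
    also have "\<dots> < \<epsilon>"
      using that r1(2)[of y] r1(2)[of q] by (simp add: r_def dist_commute)
    finally show ?thesis by simp
  qed
  show thesis
  proof (rule that[OF r])
    fix q s s' assume in_ball: "q \<in> ball p r" "s \<in> ball p r" "s' \<in> ball p r"
    have "norm (f s - f s' - f' q (s - s')) \<le> norm (s - s') * \<epsilon>"
    proof (rule differentiable_bound_linearization[where S = "ball p r" and f' = "\<lambda>y. blinfun_apply (f' y)"])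
      fix t :: real assume "t \<in> {0..1}"
      then have "(1 - t) *\<^sub>R s' + t *\<^sub>R s \<in> ball p r"
        using in_ball by (intro convexD[OF convex_ball]) auto
      then show "s' + t *\<^sub>R (s - s') \<in> ball p r" by (simp add: algebra_simps)
    next
      fix y assume "y \<in> ball p r"
      then show "(f has_derivative blinfun_apply (f' y)) (at y within ball p r)"
        using deriv r(2) has_derivative_at_withinI by blast
      show "onorm (blinfun_apply (f' y) - blinfun_apply (f' q)) \<le> \<epsilon>"
        using near[OF \<open>y \<in> ball p r\<close> in_ball(1)]
        by (simp add: norm_blinfun.rep_eq minus_blinfun.rep_eq[symmetric] fun_diff_def)
    qed (use in_ball in simp)
    then show "norm (f s - f s' - f' q (s - s')) \<le> \<epsilon> * norm (s - s')"
      by (simp add: mult.commute)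
  qed
qed

lemma C1_locally_lipschitz:
  fixes f :: "'a::real_normed_vector \<Rightarrow> 'b::real_normed_vector"
  assumes "open V" "p \<in> V"
    and "\<And>y. y \<in> V \<Longrightarrow> (f has_derivative blinfun_apply (f' y)) (at y)"
    and "isCont f' p"
  obtains r K where "r > 0" "K > 0" "ball p r \<subseteq> V"
    and "\<And>s s'. s \<in> ball p r \<Longrightarrow> s' \<in> ball p r \<Longrightarrow> norm (f s - f s') \<le> K * norm (s - s')"
proof -
  obtain r where r: "r > 0" "ball p r \<subseteq> V"
    and lin: "\<And>q s s'. q \<in> ball p r \<Longrightarrow> s \<in> ball p r \<Longrightarrow> s' \<in> ball p r \<Longrightarrow>
      norm (f s - f s' - f' q (s - s')) \<le> 1 * norm (s - s')"
    using C1_uniform_linearization[OF assms(1,2) _ assms(4) zero_less_one] assms(3) by blast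
  show thesis
  proof (rule that[OF r(1) _ r(2)])
    show "norm (f' p) + 1 > 0" by (simp add: add_nonneg_pos)
    fix s s' assume "s \<in> ball p r" "s' \<in> ball p r"
    have "norm (f s - f s') \<le> norm (f' p (s - s')) + norm (f s - f s' - f' p (s - s'))"
      by (rule norm_triangle_sub)
    also have "\<dots> \<le> norm (f' p) * norm (s - s') + 1 * norm (s - s')"
      using lin[OF _ \<open>s \<in> ball p r\<close> \<open>s' \<in> ball p r\<close>] r(1) norm_blinfun
      by (intro add_mono) simp_all
    finally show "norm (f s - f s') \<le> (norm (f' p) + 1) * norm (s - s')"
      by (simp add: algebra_simps)
  qed
qed

lemma has_derivative_annihilated_on_subspace:
  fixes f :: "'a::real_normed_vector \<Rightarrow> 'b::real_normed_vector" and h :: "'b \<Rightarrow> 'c::real_normed_vector"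
  assumes "(f has_derivative f') (at q)" "bounded_linear h" "subspace L" "q \<in> L" "e > 0"
    and vanish: "\<And>s. s \<in> L \<Longrightarrow> s \<in> ball q e \<Longrightarrow> h (f s) = 0"
    and "l \<in> L"
  shows "h (f' l) = 0"
proof -
  define g where "g t = h (f (q + t *\<^sub>R l))" for t :: real
  have "((\<lambda>t. q + t *\<^sub>R l) has_derivative (\<lambda>t. t *\<^sub>R l)) (at 0)"
    by (auto intro!: derivative_eq_intros)
  from has_derivative_compose[OF this] assms(1)
  have "((\<lambda>t. f (q + t *\<^sub>R l)) has_derivative (\<lambda>t. f' (t *\<^sub>R l))) (at 0)" by simp
  then have g': "(g has_derivative (\<lambda>t. h (f' (t *\<^sub>R l)))) (at 0)"
    unfolding g_def by (rule bounded_linear.has_derivative[OF assms(2)])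
  define e' where "e' = e / (norm l + 1)"
  have "e' > 0" using \<open>e > 0\<close> by (simp add: e'_def add_nonneg_pos)
  have g_zero: "g t = 0" if "t \<in> ball 0 e'" for t
  proof -
    have "norm (t *\<^sub>R l) \<le> \<bar>t\<bar> * (norm l + 1)" by (simp add: mult_left_mono)
    also have "\<dots> < e"
      using that \<open>e > 0\<close> by (simp add: e'_def pos_less_divide_eq add_nonneg_pos)
    finally have "q + t *\<^sub>R l \<in> ball q e" by (simp add: dist_norm)
    moreover have "q + t *\<^sub>R l \<in> L" using assms(3,4,7) by (simp add: subspace_add subspace_scale)
    ultimately show ?thesis using vanish by (simp add: g_def)
  qed
  have "(g has_derivative (\<lambda>_. 0)) (at 0)"
  proof (rule has_derivative_transform_within_open[OF has_derivative_const open_ball])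
    show "0 \<in> ball 0 e'" using \<open>e' > 0\<close> by simp
    show "\<And>t. t \<in> ball 0 e' \<Longrightarrow> 0 = g t" using g_zero by simp
  qed
  from fun_cong[OF has_derivative_unique[OF g' this], of 1] show ?thesis by simp
qed

lemma eq_0_if_orthogonal_approx:
  fixes d v :: "'a::real_inner"
  assumes "inner d v = 0" "norm (d - v) \<le> c * norm d" "c < 1"
  shows "d = 0"
proof -
  have "(norm d)\<^sup>2 = inner d (d - v)"
    using assms(1) by (simp add: inner_diff_right power2_norm_eq_inner)
  also have "\<dots> \<le> norm d * norm (d - v)" by (rule norm_cauchy_schwarz)
  also have "\<dots> \<le> c * (norm d)\<^sup>2"
    using mult_left_mono[OF assms(2) norm_ge_zero] by (simp add: power2_eq_square mult_ac)
  finally have "(1 - c) * (norm d)\<^sup>2 \<le> 0" by (simp add: algebra_simps)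
  then show ?thesis using assms(3) by (simp add: mult_le_0_iff)
qed

lemma pact_transpose_nth: "pact (Transposition.transpose i j) x $ k = x $ Transposition.transpose i j k"
  by (simp add: pact_def)

lemma pact_transpose_fixed: "x $ i = x $ j \<Longrightarrow> pact (Transposition.transpose i j) x = x"
  by (simp add: vec_eq_iff pact_transpose_nth Transposition.transpose_def)

lemma pact_diff: "pact \<sigma> (x - y) = pact \<sigma> x - pact \<sigma> y"
  by (simp add: pact_def vec_eq_iff)

lemma norm_pact:
  fixes \<sigma> :: "'n::finite \<Rightarrow> 'n"
  assumes "\<sigma> permutes UNIV" shows "norm (pact \<sigma> x) = norm x"
proof -
  have "(\<Sum>k\<in>UNIV. (norm (x $ inv \<sigma> k))\<^sup>2) = (\<Sum>k\<in>UNIV. (norm (x $ k))\<^sup>2)"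
    using sum.permute[OF permutes_inv[OF assms], of "\<lambda>k. (norm (x $ k))\<^sup>2"] by (simp add: comp_def)
  then show ?thesis by (simp add: norm_vec_def L2_set_def pact_def)
qed

lemma dist_pact:
  fixes \<sigma> :: "'n::finite \<Rightarrow> 'n"
  assumes "\<sigma> permutes UNIV" shows "dist (pact \<sigma> x) (pact \<sigma> y) = dist x y"
  by (simp add: dist_norm pact_diff[symmetric] norm_pact[OF assms])

lemma inner_transpose_diff:
  assumes "v $ i = v $ j"
  shows "inner (x - pact (Transposition.transpose i j) x) v = 0"
proof (cases "i = j")
  case False
  have "x - pact (Transposition.transpose i j) x = (x $ i - x $ j) *\<^sub>R (axis i 1 - axis j 1)"
    using False by (auto simp: vec_eq_iff pact_transpose_nth Transposition.transpose_def axis_def)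
  then show ?thesis using assms by (simp add: inner_diff_left inner_axis')
qed (simp add: pact_def)

lemma coords_eq_if_swap_approx:
  assumes "v $ i = v $ j" "c < 1"
    and "norm (x - pact (Transposition.transpose i j) x - v) \<le> c * norm (x - pact (Transposition.transpose i j) x)"
  shows "x $ i = x $ j"
proof -
  have "x - pact (Transposition.transpose i j) x = 0"
    using eq_0_if_orthogonal_approx[OF inner_transpose_diff[OF assms(1)] assms(3,2)] .
  then have "x $ i = pact (Transposition.transpose i j) x $ i" by simp
  then show ?thesis by (simp add: pact_transpose_nth)
qed

lemma locally_symmetric_transpose_invariant:
  fixes M :: "(real^'n::{finite,linorder}) set"
  assumes "locally_symmetric M" "w \<in> M" "w $ i = w $ j"
  obtains \<delta> where "\<delta> > 0"
    and "\<And>x. x \<in> M \<Longrightarrow> dist w x < \<delta> \<Longrightarrow> pact (Transposition.transpose i j) x \<in> M"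
proof -
  obtain \<delta> where "\<delta> > 0" and sym: "\<forall>y\<in>M \<inter> ball w \<delta>. \<forall>\<sigma>. \<sigma> permutes UNIV \<and> pact \<sigma> y = y \<longrightarrow>
      pact \<sigma> ` (M \<inter> ball w \<delta>) = M \<inter> ball w \<delta>"
    using conjunct2[OF assms(1)[unfolded locally_symmetric_def], rule_format, OF assms(2)] by blast
  have "w \<in> M \<inter> ball w \<delta>" using assms(2) \<open>\<delta> > 0\<close> by simp
  moreover have "Transposition.transpose i j permutes UNIV" by (simp add: permutes_swap_id)
  ultimately have "pact (Transposition.transpose i j) ` (M \<inter> ball w \<delta>) = M \<inter> ball w \<delta>"
    using sym pact_transpose_fixed[OF assms(3)] by (simp only: Ball_def)
  then have "pact (Transposition.transpose i j) x \<in> M" if "x \<in> M" "dist w x < \<delta>" for x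
    using that by (metis IntD1 IntI image_eqI mem_ball)
  then show thesis using that[OF \<open>\<delta> > 0\<close>] by blast
qed

definition locally_eq_coords :: "(real^'n) set \<Rightarrow> 'n \<Rightarrow> 'n \<Rightarrow> (real^'n) set" where
  "locally_eq_coords M i j = {x \<in> M. \<exists>\<delta>>0. \<forall>y \<in> M \<inter> ball x \<delta>. y $ i = y $ j}"

lemma locally_eq_coords_subset: "locally_eq_coords M i j \<subseteq> M \<inter> {x. x $ i = x $ j}"
  unfolding locally_eq_coords_def by force

lemma openin_locally_eq_coords: "openin (top_of_set M) (locally_eq_coords M i j)"
  unfolding openin_euclidean_subtopology_iff
proof (intro conjI ballI)
  show "locally_eq_coords M i j \<subseteq> M" using locally_eq_coords_subset by blast
  fix x assume "x \<in> locally_eq_coords M i j"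
  then obtain \<delta> where "\<delta> > 0" and \<delta>: "\<And>y. y \<in> M \<inter> ball x \<delta> \<Longrightarrow> y $ i = y $ j"
    unfolding locally_eq_coords_def by blast
  have "x' \<in> locally_eq_coords M i j" if "x' \<in> M" "dist x' x < \<delta> / 2" for x'
  proof -
    have "y $ i = y $ j" if "y \<in> M \<inter> ball x' (\<delta> / 2)" for y
      using \<delta> that \<open>dist x' x < \<delta> / 2\<close> dist_triangle[of x y x'] by (simp add: dist_commute)
    then show ?thesis using \<open>x' \<in> M\<close> \<open>\<delta> > 0\<close> unfolding locally_eq_coords_def
      by (intro CollectI conjI exI[of _ "\<delta> / 2"]) auto
  qed
  then show "\<exists>e>0. \<forall>x'\<in>M. dist x' x < e \<longrightarrow> x' \<in> locally_eq_coords M i j"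
    using \<open>\<delta> > 0\<close> half_gt_zero by blast
qed

lemma chart_inverse_derivative_annihilated:
  fixes \<phi> :: "'a::real_normed_vector \<Rightarrow> 'b::real_normed_vector" and h :: "'a \<Rightarrow> 'c::real_normed_vector"
  assumes chart: "open (\<phi> ` U)" "subspace L" "\<phi> ` (M \<inter> U) = L \<inter> \<phi> ` U" "\<And>x. x \<in> U \<Longrightarrow> \<psi> (\<phi> x) = x"
    and "z \<in> M \<inter> U" "(\<psi> has_derivative D) (at (\<phi> z))" "bounded_linear h"
    and "\<delta> > 0" "\<forall>y \<in> M \<inter> ball z \<delta>. h y = 0" "l \<in> L"
  shows "h (D l) = 0"
proof -
  have "isCont \<psi> (\<phi> z)" using has_derivative_continuous[OF assms(6)] .
  then obtain e1 where "e1 > 0" and e1: "\<And>s. dist s (\<phi> z) < e1 \<Longrightarrow> dist (\<psi> s) z < \<delta>"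
    using \<open>\<delta> > 0\<close> chart(4) assms(5) unfolding continuous_at_eps_delta by force
  obtain e2 where "e2 > 0" and e2: "ball (\<phi> z) e2 \<subseteq> \<phi> ` U"
    using chart(1) assms(5) open_contains_ball by blast
  have vanish: "h (\<psi> s) = 0" if "s \<in> L" "s \<in> ball (\<phi> z) (min e1 e2)" for s
  proof -
    have "s \<in> \<phi> ` (M \<inter> U)" using that e2 chart(3) by auto
    then obtain m where m: "m \<in> M \<inter> U" "s = \<phi> m" by blast
    then have "dist m z < \<delta>" using e1[of s] that(2) chart(4) by (simp add: dist_commute)
    then show ?thesis using assms(9) m chart(4) by (auto simp: dist_commute)
  qed
  have "\<phi> z \<in> L" using chart(3) assms(5) by blast
  moreover have "min e1 e2 > 0" using \<open>e1 > 0\<close> \<open>e2 > 0\<close> by simp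
  ultimately show ?thesis
    using has_derivative_annihilated_on_subspace[OF assms(6,7) chart(2) _ _ vanish assms(10)] by blast
qed

lemma C1_inverse_uniform_linearization:
  fixes \<phi> :: "'a::real_normed_vector \<Rightarrow> 'b::real_normed_vector"
  assumes "open U" "w \<in> U" "open (\<phi> ` U)" "\<And>x. x \<in> U \<Longrightarrow> \<psi> (\<phi> x) = x"
    and \<phi>': "\<And>x. x \<in> U \<Longrightarrow> (\<phi> has_derivative blinfun_apply (\<phi>' x)) (at x)" "isCont \<phi>' w"
    and \<psi>': "\<And>s. s \<in> \<phi> ` U \<Longrightarrow> (\<psi> has_derivative blinfun_apply (\<psi>' s)) (at s)" "isCont \<psi>' (\<phi> w)"
    and "c > 0"
  obtains \<delta> where "\<delta> > 0" "ball w \<delta> \<subseteq> U"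
    and "\<And>z x x'. z \<in> ball w \<delta> \<Longrightarrow> x \<in> ball w \<delta> \<Longrightarrow> x' \<in> ball w \<delta> \<Longrightarrow>
      norm (x - x' - \<psi>' (\<phi> z) (\<phi> x - \<phi> x')) \<le> c * norm (x - x')"
proof -
  obtain r1 K where "r1 > 0" "K > 0" "ball w r1 \<subseteq> U"
    and lipschitz: "\<And>x x'. x \<in> ball w r1 \<Longrightarrow> x' \<in> ball w r1 \<Longrightarrow> norm (\<phi> x - \<phi> x') \<le> K * norm (x - x')"
    using C1_locally_lipschitz[OF assms(1,2) _ \<phi>'(2)] \<phi>'(1) by blast
  have "\<phi> w \<in> \<phi> ` U" using assms(2) by simp
  then obtain r2 where "r2 > 0" "ball (\<phi> w) r2 \<subseteq> \<phi> ` U"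
    and linear: "\<And>q s s'. q \<in> ball (\<phi> w) r2 \<Longrightarrow> s \<in> ball (\<phi> w) r2 \<Longrightarrow> s' \<in> ball (\<phi> w) r2 \<Longrightarrow>
      norm (\<psi> s - \<psi> s' - \<psi>' q (s - s')) \<le> c / K * norm (s - s')"
    using C1_uniform_linearization[OF assms(3) _ _ \<psi>'(2), where \<epsilon> = "c / K"] \<psi>'(1) \<open>K > 0\<close> \<open>c > 0\<close>
    by (metis divide_pos_pos)
  obtain d where "d > 0" and d: "\<And>x. dist x w < d \<Longrightarrow> dist (\<phi> x) (\<phi> w) < r2"
    using has_derivative_continuous[OF \<phi>'(1)[OF assms(2)]] \<open>r2 > 0\<close>
    unfolding continuous_at_eps_delta by blast
  define \<delta> where "\<delta> = min r1 d"
  have near: "x \<in> ball w r1" "x \<in> U" "\<phi> x \<in> ball (\<phi> w) r2" if "x \<in> ball w \<delta>" for x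
    using that d[of x] \<open>ball w r1 \<subseteq> U\<close> by (auto simp: \<delta>_def dist_commute)
  show thesis
  proof (rule that)
    show "\<delta> > 0" using \<open>r1 > 0\<close> \<open>d > 0\<close> by (simp add: \<delta>_def)
    show "ball w \<delta> \<subseteq> U" using near(2) by blast
    fix z x x' assume "z \<in> ball w \<delta>" "x \<in> ball w \<delta>" "x' \<in> ball w \<delta>"
    note near = near[OF this(1)] near[OF this(2)] near[OF this(3)]
    have "norm (x - x' - \<psi>' (\<phi> z) (\<phi> x - \<phi> x')) \<le> c / K * norm (\<phi> x - \<phi> x')"
      using linear[of "\<phi> z" "\<phi> x" "\<phi> x'"] near assms(4) by simp
    also have "\<dots> \<le> c / K * (K * norm (x - x'))"
      using lipschitz[of x x'] near \<open>c > 0\<close> \<open>K > 0\<close> by (intro mult_left_mono) simp_all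
    finally show "norm (x - x' - \<psi>' (\<phi> z) (\<phi> x - \<phi> x')) \<le> c * norm (x - x')"
      using \<open>K > 0\<close> by simp
  qed
qed

lemma C2_submanifold_uniform_chart:
  fixes M :: "'a::euclidean_space set"
  assumes "C2_submanifold M" "w \<in> M" "c > 0"
  obtains \<delta> L and \<phi> :: "'a \<Rightarrow> 'a" and D :: "'a \<Rightarrow> 'a \<Rightarrow> 'a"
  where "\<delta> > 0" "subspace L" "\<And>x. x \<in> M \<Longrightarrow> dist w x < \<delta> \<Longrightarrow> \<phi> x \<in> L"
    and "\<And>z x x'. dist w z < \<delta> \<Longrightarrow> dist w x < \<delta> \<Longrightarrow> dist w x' < \<delta> \<Longrightarrow>
      norm (x - x' - D z (\<phi> x - \<phi> x')) \<le> c * norm (x - x')"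
    and "\<And>z (h :: 'a \<Rightarrow> 'b::real_normed_vector) e l. z \<in> M \<Longrightarrow> dist w z < \<delta> \<Longrightarrow>
      bounded_linear h \<Longrightarrow> e > 0 \<Longrightarrow> \<forall>y \<in> M \<inter> ball z e. h y = 0 \<Longrightarrow> l \<in> L \<Longrightarrow>
      h (D z l) = 0"
proof -
  obtain U L and \<phi> \<psi> :: "'a \<Rightarrow> 'a" and \<phi>' \<psi>' where chart:
    "open U" "w \<in> U" "open (\<phi> ` U)" "subspace L" "\<phi> ` (M \<inter> U) = L \<inter> \<phi> ` U"
    "\<And>x. x \<in> U \<Longrightarrow> \<psi> (\<phi> x) = x"
    and \<phi>': "\<And>x. x \<in> U \<Longrightarrow> (\<phi> has_derivative blinfun_apply (\<phi>' x)) (at x)" "\<And>x. x \<in> U \<Longrightarrow> isCont \<phi>' x"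
    and \<psi>': "\<And>s. s \<in> \<phi> ` U \<Longrightarrow> (\<psi> has_derivative blinfun_apply (\<psi>' s)) (at s)"
      "\<And>s. s \<in> \<phi> ` U \<Longrightarrow> isCont \<psi>' s"
    by (rule C2_submanifold_chart[OF assms(1,2)]) (rule that)
  obtain \<delta> where "\<delta> > 0" "ball w \<delta> \<subseteq> U"
    and linearized: "\<And>z x x'. z \<in> ball w \<delta> \<Longrightarrow> x \<in> ball w \<delta> \<Longrightarrow> x' \<in> ball w \<delta> \<Longrightarrow>
      norm (x - x' - \<psi>' (\<phi> z) (\<phi> x - \<phi> x')) \<le> c * norm (x - x')"
    using C1_inverse_uniform_linearization[OF chart(1-3) _ _ \<phi>'(2)[OF chart(2)] _ \<psi>'(2) assms(3)]
      chart(2,6) \<phi>'(1) \<psi>'(1) by blast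
  show thesis
  proof (rule that[of \<delta> L \<phi> "\<lambda>z. blinfun_apply (\<psi>' (\<phi> z))"])
    show "\<phi> x \<in> L" if "x \<in> M" "dist w x < \<delta>" for x
    proof -
      have "\<phi> x \<in> \<phi> ` (M \<inter> U)" using that \<open>ball w \<delta> \<subseteq> U\<close> by auto
      then show ?thesis unfolding chart(5) by simp
    qed
  next
    fix z and h :: "'a \<Rightarrow> 'b" and e l
    assume "z \<in> M" "dist w z < \<delta>" "bounded_linear h" "e > 0"
      and "\<forall>y \<in> M \<inter> ball z e. h y = 0" "l \<in> L"
    moreover have "(\<psi> has_derivative blinfun_apply (\<psi>' (\<phi> z))) (at (\<phi> z))"
      using \<psi>'(1) \<open>dist w z < \<delta>\<close> \<open>ball w \<delta> \<subseteq> U\<close> by auto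
    moreover have "z \<in> M \<inter> U" using \<open>z \<in> M\<close> \<open>dist w z < \<delta>\<close> \<open>ball w \<delta> \<subseteq> U\<close> by auto
    ultimately show "h (\<psi>' (\<phi> z) l) = 0"
      by (intro chart_inverse_derivative_annihilated[OF chart(3-5), of \<psi> z _ h e l]) (simp_all add: chart(6))
  qed (use \<open>\<delta> > 0\<close> chart(4) linearized in auto)
qed

lemma locally_eq_coords_islimpt:
  fixes M :: "(real^'n::{finite,linorder}) set"
  assumes sub: "C2_submanifold M" and sym: "locally_symmetric M"
    and "w \<in> M" and limpt: "w islimpt locally_eq_coords M i j"
  shows "w \<in> locally_eq_coords M i j"
proof -
  have "closed {x. x $ i = (x $ j :: real)}"
    by (intro closed_Collect_eq continuous_intros)
  moreover have "w islimpt {x. x $ i = x $ j}"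
    using islimpt_subset[OF limpt] locally_eq_coords_subset by blast
  ultimately have "w $ i = w $ j" by (simp add: closed_limpt)
  then obtain \<delta>0 where "\<delta>0 > 0"
    and swap: "\<And>x. x \<in> M \<Longrightarrow> dist w x < \<delta>0 \<Longrightarrow> pact (Transposition.transpose i j) x \<in> M"
    by (rule locally_symmetric_transpose_invariant[OF sym \<open>w \<in> M\<close>]) (rule that)
  obtain \<delta>1 L and \<phi> :: "(real, 'n) vec \<Rightarrow> (real, 'n) vec" and D where "\<delta>1 > 0" "subspace L"
    and in_L: "\<And>x. x \<in> M \<Longrightarrow> dist w x < \<delta>1 \<Longrightarrow> \<phi> x \<in> L"
    and linearized: "\<And>z x x'. dist w z < \<delta>1 \<Longrightarrow> dist w x < \<delta>1 \<Longrightarrow> dist w x' < \<delta>1 \<Longrightarrow>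
      norm (x - x' - D z (\<phi> x - \<phi> x')) \<le> 1 / 2 * norm (x - x')"
    and tangent: "\<And>z (h :: (real, 'n) vec \<Rightarrow> real) e l. z \<in> M \<Longrightarrow> dist w z < \<delta>1 \<Longrightarrow>
      bounded_linear h \<Longrightarrow> e > 0 \<Longrightarrow> \<forall>y \<in> M \<inter> ball z e. h y = 0 \<Longrightarrow> l \<in> L \<Longrightarrow>
      h (D z l) = 0"
    by (rule C2_submanifold_uniform_chart[OF sub \<open>w \<in> M\<close> half_gt_zero[OF zero_less_one]]) (rule that)
  define \<delta> where "\<delta> = min \<delta>0 \<delta>1"
  have "\<delta> > 0" using \<open>\<delta>0 > 0\<close> \<open>\<delta>1 > 0\<close> by (simp add: \<delta>_def)
  obtain z where "z \<in> locally_eq_coords M i j" "dist z w < \<delta>"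
    using limpt \<open>\<delta> > 0\<close> unfolding islimpt_approachable by auto
  then obtain e where "z \<in> M" "dist w z < \<delta>1" "e > 0"
    and eq_near_z: "\<And>y. y \<in> M \<inter> ball z e \<Longrightarrow> y $ i = y $ j"
    unfolding locally_eq_coords_def by (auto simp: \<delta>_def dist_commute)
  have "bounded_linear (\<lambda>v :: (real, 'n) vec. v $ i - v $ j)"
    by (intro bounded_linear_sub bounded_linear_vec_nth)
  then have in_hyperplane: "D z l $ i = D z l $ j" if "l \<in> L" for l
    using tangent[OF \<open>z \<in> M\<close> \<open>dist w z < \<delta>1\<close> _ \<open>e > 0\<close> _ that] eq_near_z by force
  have "x $ i = x $ j" if "x \<in> M" "dist w x < \<delta>" for x
  proof -
    define x' where "x' = pact (Transposition.transpose i j) x"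
    have "x' \<in> M" using swap[OF that(1)] that(2) by (simp add: x'_def \<delta>_def)
    have "dist w x' < \<delta>"
      using that(2) dist_pact[of "Transposition.transpose i j" w x]
        pact_transpose_fixed[OF \<open>w $ i = w $ j\<close>]
      by (simp add: x'_def permutes_swap_id)
    have "D z (\<phi> x - \<phi> x') $ i = D z (\<phi> x - \<phi> x') $ j"
      using in_hyperplane subspace_diff[OF \<open>subspace L\<close>] in_L \<open>x' \<in> M\<close> \<open>dist w x' < \<delta>\<close> that
      by (simp add: \<delta>_def)
    moreover have "norm (x - x' - D z (\<phi> x - \<phi> x')) \<le> 1 / 2 * norm (x - x')"
      using linearized \<open>dist w z < \<delta>1\<close> \<open>dist w x' < \<delta>\<close> that(2) by (simp add: \<delta>_def)
    ultimately show ?thesis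
      using coords_eq_if_swap_approx[of _ i j "1 / 2" x] unfolding x'_def by simp
  qed
  then show ?thesis unfolding locally_eq_coords_def
    using \<open>w \<in> M\<close> \<open>\<delta> > 0\<close> by (intro CollectI conjI exI[of _ \<delta>]) auto
qed

lemma locally_eq_coords_empty_or_all:
  fixes M :: "(real^'n::{finite,linorder}) set"
  assumes "locally_symmetric_C2_submanifold M"
  shows "locally_eq_coords M i j = {} \<or> locally_eq_coords M i j = M"
proof -
  have "closedin (top_of_set M) (locally_eq_coords M i j)"
    unfolding closedin_limpt using assms locally_eq_coords_islimpt locally_eq_coords_subset
    unfolding locally_symmetric_C2_submanifold_def by blast
  then show ?thesis
    using assms openin_locally_eq_coords
    unfolding locally_symmetric_C2_submanifold_def connected_clopen by blast
qed

lemma locally_eq_coords_characteristic: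
  fixes M :: "(real^'n::{finite,linorder}) set"
  assumes "locally_symmetric_C2_submanifold M" "characteristic_perm M \<sigma>s"
  shows "locally_eq_coords M i j = (if j \<in> cyc \<sigma>s i then M else {})"
proof -
  obtain y \<rho> where "y \<in> M" "\<rho> > 0" and Delta_near_y: "M \<inter> ball y \<rho> \<subseteq> Delta \<sigma>s"
    and perm: "\<sigma>s permutes UNIV"
    using assms(2) unfolding characteristic_perm_def by blast
  have "y \<in> locally_eq_coords M i j \<longleftrightarrow> j \<in> cyc \<sigma>s i"
  proof
    assume "y \<in> locally_eq_coords M i j"
    then have "y $ j = y $ i" using locally_eq_coords_subset by fastforce
    moreover have "y \<in> Delta \<sigma>s" using Delta_near_y \<open>y \<in> M\<close> \<open>\<rho> > 0\<close> by auto
    ultimately show "j \<in> cyc \<sigma>s i" using Delta_eq_iff_cyc[OF perm] by blast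
  next
    assume "j \<in> cyc \<sigma>s i"
    then have "x $ i = x $ j" if "x \<in> M \<inter> ball y \<rho>" for x
      using Delta_eq_iff_cyc[OF perm] Delta_near_y that by (metis subsetD)
    then show "y \<in> locally_eq_coords M i j"
      using \<open>y \<in> M\<close> \<open>\<rho> > 0\<close> unfolding locally_eq_coords_def by blast
  qed
  then show ?thesis using locally_eq_coords_empty_or_all[OF assms(1), of i j] \<open>y \<in> M\<close> by auto
qed

lemma characteristic_perm_cyc_coords_eq:
  fixes M :: "(real^'n::{finite,linorder}) set"
  assumes "locally_symmetric_C2_submanifold M" "characteristic_perm M \<sigma>s"
    and "x \<in> M" "j \<in> cyc \<sigma>s i"
  shows "x $ i = x $ j"
  using locally_eq_coords_characteristic[OF assms(1,2), of i j] locally_eq_coords_subset[of M i j] assms(3,4)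
  by auto

lemma characteristic_perm_supp_coords_eq_iff:
  fixes M :: "(real^'n::{finite,linorder}) set"
  assumes M: "locally_symmetric_C2_submanifold M" and char: "characteristic_perm M \<sigma>s"
    and "x \<in> M" "c \<in> supp \<sigma>s"
  shows "x $ k = x $ c \<longleftrightarrow> k \<in> cyc \<sigma>s c"
proof
  show "k \<in> cyc \<sigma>s c \<Longrightarrow> x $ k = x $ c"
    using characteristic_perm_cyc_coords_eq[OF M char \<open>x \<in> M\<close>] by metis
  assume "x $ k = x $ c"
  show "k \<in> cyc \<sigma>s c"
  proof (rule ccontr)
    assume "k \<notin> cyc \<sigma>s c"
    then have "c \<noteq> k" "\<sigma>s c \<noteq> k" using cyc_self cyc_apply by metis+
    moreover have "\<sigma>s c \<noteq> c" using \<open>c \<in> supp \<sigma>s\<close> by (simp add: supp_def)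
    ultimately have swap_fixes: "Transposition.transpose c k (\<sigma>s c) = \<sigma>s c"
      by (simp add: Transposition.transpose_def)
    obtain \<delta> where "\<delta> > 0" and swap:
      "\<And>y. y \<in> M \<Longrightarrow> dist x y < \<delta> \<Longrightarrow> pact (Transposition.transpose c k) y \<in> M"
      using M \<open>x \<in> M\<close> \<open>x $ k = x $ c\<close> unfolding locally_symmetric_C2_submanifold_def
      by (metis locally_symmetric_transpose_invariant)
    have tied: "z $ c = z $ \<sigma>s c" if "z \<in> M" for z
      using characteristic_perm_cyc_coords_eq[OF M char that cyc_apply] .
    \<comment> \<open>the swap keeps M near x, fixes coordinate \<sigma>s c, and \<sigma>s c is tied to c on all of M\<close>
    have "y $ c = y $ k" if "y \<in> M" "dist x y < \<delta>" for y
    proof -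
      have "y $ \<sigma>s c = pact (Transposition.transpose c k) y $ \<sigma>s c"
        using swap_fixes by (simp add: pact_transpose_nth)
      also have "\<dots> = pact (Transposition.transpose c k) y $ c"
        using tied[OF swap[OF that]] by simp
      also have "\<dots> = y $ k" by (simp add: pact_transpose_nth)
      finally show ?thesis using tied[OF that(1)] by simp
    qed
    then have "x \<in> locally_eq_coords M c k"
      using \<open>x \<in> M\<close> \<open>\<delta> > 0\<close> unfolding locally_eq_coords_def by auto
    then show False
      using locally_eq_coords_characteristic[OF M char] \<open>k \<notin> cyc \<sigma>s c\<close> by simp
  qed
qed

lemma cyc_eq_characteristic_perm_on_supp:
  fixes M :: "(real^'n::{finite,linorder}) set"
  assumes "locally_symmetric_C2_submanifold M" "characteristic_perm M \<sigma>s"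
    and "\<sigma> permutes UNIV" "x \<in> M \<inter> Delta \<sigma>" "c \<in> supp \<sigma>s"
  shows "cyc \<sigma> c = cyc \<sigma>s c"
proof (rule set_eqI)
  fix k
  have "k \<in> cyc \<sigma> c \<longleftrightarrow> x $ k = x $ c" using Delta_eq_iff_cyc[OF assms(3)] assms(4) by simp
  also have "\<dots> \<longleftrightarrow> k \<in> cyc \<sigma>s c"
    using characteristic_perm_supp_coords_eq_iff[OF assms(1,2) _ assms(5)] assms(4) by simp
  finally show "k \<in> cyc \<sigma> c \<longleftrightarrow> k \<in> cyc \<sigma>s c" .
qed

theorem proposition3p32:
  fixes M :: "(real^'n::{finite,linorder}) set"
    and \<sigma>s \<sigma> \<tau> :: "'n \<Rightarrow> 'n"
  assumes "locally_symmetric_C2_submanifold M"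
    and "characteristic_perm M \<sigma>s"
    and "\<sigma> permutes UNIV" and "M \<inter> Delta \<sigma> \<noteq> {}"
    and "\<tau> permutes UNIV" and "refines (Pperm \<tau>) (Pperm \<sigma>)"
  defines "F \<equiv> UNIV - supp \<sigma>s"
  defines "S \<equiv> supp \<sigma>s"
  shows "(\<forall>C\<in>Pperm \<tau>. C \<subseteq> F \<or> C \<subseteq> S) \<and> (\<forall>C\<in>Pperm \<sigma>. C \<subseteq> F \<or> C \<subseteq> S)
    \<and> refines (orbit_partition_on F (perm_restrict \<tau> F)) (orbit_partition_on F (perm_restrict \<sigma> F))
    \<and> orbit_partition_on S (perm_restrict \<sigma> S) = orbit_partition_on S (perm_restrict \<sigma>s S)
    \<and> refines (orbit_partition_on S (perm_restrict \<tau> S)) (orbit_partition_on S (perm_restrict \<sigma> S))"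
proof -
  have "\<sigma>s permutes UNIV" using assms(2) unfolding characteristic_perm_def by blast
  obtain x where "x \<in> M \<inter> Delta \<sigma>" using assms(4) by blast
  have same_cyc: "cyc \<sigma> c = cyc \<sigma>s c" if "c \<in> S" for c
    using cyc_eq_characteristic_perm_on_supp[OF assms(1-3) \<open>x \<in> M \<inter> Delta \<sigma>\<close>] that by (simp add: S_def)
  have S_closed_\<sigma>s: "cyc \<sigma>s c \<subseteq> S" if "c \<in> S" for c
    using cyc_subset_supp[OF \<open>\<sigma>s permutes UNIV\<close>] that by (simp add: S_def)
  then have S_closed: "cyc \<sigma> c \<subseteq> S" if "c \<in> S" for c using same_cyc that by simp
  have finer: "cyc \<tau> i \<subseteq> cyc \<sigma> i" for i by (rule cyc_subset_if_refines[OF assms(5,6)])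
  have F_closed: "cyc \<sigma> i \<subseteq> F" if "i \<in> F" for i
    using cyc_subset_diff_if_closed[OF assms(3) S_closed] that by (simp add: F_def S_def)
  show ?thesis
  proof (intro conjI)
    show "\<forall>C\<in>Pperm \<tau>. C \<subseteq> F \<or> C \<subseteq> S" "\<forall>C\<in>Pperm \<sigma>. C \<subseteq> F \<or> C \<subseteq> S"
      using Pperm_subset_diff_or_subset[OF assms(3) S_closed] finer unfolding F_def S_def by blast+
    show "refines (orbit_partition_on F (perm_restrict \<tau> F)) (orbit_partition_on F (perm_restrict \<sigma> F))"
      by (rule refines_perm_restrict[OF assms(3,5) F_closed finer])
    show "orbit_partition_on S (perm_restrict \<sigma> S) = orbit_partition_on S (perm_restrict \<sigma>s S)"
      by (simp add: orbit_partition_on_perm_restrict S_closed S_closed_\<sigma>s Setcompr_eq_image same_cyc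
          cong: image_cong)
    show "refines (orbit_partition_on S (perm_restrict \<tau> S)) (orbit_partition_on S (perm_restrict \<sigma> S))"
      by (rule refines_perm_restrict[OF assms(3,5) S_closed finer])
  qed
qed

end
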